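(* Let $X$ be a complex Banach space, $\mathcal{F}$ and $\mathcal{G}$ algebras with unit, $\eta:\mathcal{G}\to\mathcal{F}$ a unital algebra homomorphism, and $\Phi:\mathcal{F}\to\mathcal{C}(X)$, $\Psi:\mathcal{G}\to\mathcal{C}(X)$ proto-calculi. Let $\mathcal{E}$ be an algebraic core for $\Psi$ such that $\Phi(\eta(e))=\Psi(e)$ for all $e\in\mathcal{E}$. Then the following are equivalent: (i) $\Phi\circ\eta=\Psi$; (ii) $\eta(\mathcal{G})$ is a $\Phi$-regular subalgebra of $\mathcal{F}$; (iii) $\eta(\mathcal{E})$ is an algebraic core for the restriction of $\Phi$ to $\eta(\mathcal{G})$. Moreover, (i)–(iii) hold if $\Phi$ is a calculus and $\mathcal{F}$ is commutative.
   Context: Algebras need not be commutative. $\mathcal{L}(X)$, $\mathcal{C}(X)$: bounded, resp. closed linear operators on $X$; operator inclusions are graph inclusions, sums/products have natural domains, "$Tx=y$" means $x\in\mathrm{dom}(T)$, $Tx=y$. For a unital algebra $\mathcal{H}$, a proto-calculus is a map $\Phi:\mathcal{H}\to\mathcal{C}(X)$ with (FC1) $\Phi(\mathbf{1})=I$; (FC2) $\lambda\Phi(f)\subseteq\Phi(\lambda f)$, $\Phi(f)+\Phi(g)\subseteq\Phi(f+g)$; (FC3) $\Phi(f)\Phi(g)\subseteq\Phi(fg)$ with $\mathrm{dom}(\Phi(f)\Phi(g))=\mathrm{dom}(\Phi(g))\cap\mathrm{dom}(\Phi(fg))$. $\mathrm{bdd}(\mathcal{H},\Phi)=\{f:\Phi(f)\in\mathcal{L}(X)\}$;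 for $\mathcal{E}\subseteq\mathcal{H}$, $[f]_{\mathcal{E}}=\{e\in\mathcal{E}:ef\in\mathcal{E}\}$; $\mathrm{reg}(f,\Phi)=[f]_{\mathrm{bdd}(\mathcal{H},\Phi)}$. A subset $\mathcal{E}\subseteq\mathrm{bdd}(\mathcal{H},\Phi)$ is an algebraic core for $\Phi$ if for every $f\in\mathcal{H}$ and $x,y\in X$: $\Phi(f)x=y\iff\Phi(ef)x=\Phi(e)y$ for all $e\in[f]_{\mathcal{E}}$. A calculus is a proto-calculus for which $\mathrm{bdd}(\mathcal{H},\Phi)$ is an algebraic core. A unital subalgebra $\mathcal{H}_0$ of $\mathcal{H}$ is $\Phi$-regular if the restriction $\Phi|_{\mathcal{H}_0}$ is a calculus on $\mathcal{H}_0$. *)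

theory Defs
  imports "HOL-Analysis.Analysis"
begin

text \<open>Complex structure on a Banach space X (real Banach space given by the type
  class banach) via an explicit complex scalar multiplication sc.\<close>
definition complex_banach_scalar :: "(complex \<Rightarrow> 'x::banach \<Rightarrow> 'x) \<Rightarrow> bool" where
  "complex_banach_scalar sc \<longleftrightarrow> Vector_Spaces.vector_space sc
     \<and> (\<forall>r x. sc (complex_of_real r) x = r *\<^sub>R x)
     \<and> (\<forall>c x. norm (sc c x) = cmod c * norm x)"

definition complex_algebra :: "(complex \<Rightarrow> 'f::{ring,monoid_mult} \<Rightarrow> 'f) \<Rightarrow> bool" where
  "complex_algebra scF \<longleftrightarrow> Vector_Spaces.vector_space scF
     \<and> (\<forall>c a b. scF c (a * b) = scF c a * b \<and> scF c (a * b) = a * scF c b)"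

definition unital_alg_hom ::
  "(complex \<Rightarrow> 'g::{ring,monoid_mult} \<Rightarrow> 'g) \<Rightarrow> (complex \<Rightarrow> 'f::{ring,monoid_mult} \<Rightarrow> 'f)
   \<Rightarrow> ('g \<Rightarrow> 'f) \<Rightarrow> bool" where
  "unital_alg_hom scG scF \<eta> \<longleftrightarrow> \<eta> 1 = 1
     \<and> (\<forall>a b. \<eta> (a + b) = \<eta> a + \<eta> b \<and> \<eta> (a * b) = \<eta> a * \<eta> b)
     \<and> (\<forall>c a. \<eta> (scG c a) = scF c (\<eta> a))"

definition unital_subalgebra :: "(complex \<Rightarrow> 'f::{ring,monoid_mult} \<Rightarrow> 'f) \<Rightarrow> 'f set \<Rightarrow> bool" where
  "unital_subalgebra scF H \<longleftrightarrow> 1 \<in> H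
     \<and> (\<forall>a\<in>H. \<forall>b\<in>H. a + b \<in> H \<and> a * b \<in> H) \<and> (\<forall>c. \<forall>a\<in>H. scF c a \<in> H)"

text \<open>Linear operators on X are represented by their graphs; "T x = y" is (x,y) \<in> T.\<close>
type_synonym 'x op = "('x \<times> 'x) set"

definition op_dom :: "'x op \<Rightarrow> 'x set" where
  "op_dom T = {x. \<exists>y. (x, y) \<in> T}"

definition linear_op :: "(complex \<Rightarrow> 'x::banach \<Rightarrow> 'x) \<Rightarrow> 'x op \<Rightarrow> bool" where
  "linear_op sc T \<longleftrightarrow> (\<forall>x y y'. (x, y) \<in> T \<longrightarrow> (x, y') \<in> T \<longrightarrow> y = y')
     \<and> (0, 0) \<in> T
     \<and> (\<forall>x y x' y'. (x, y) \<in> T \<longrightarrow> (x', y') \<in> T \<longrightarrow> (x + x', y + y') \<in> T)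
     \<and> (\<forall>c x y. (x, y) \<in> T \<longrightarrow> (sc c x, sc c y) \<in> T)"

definition closed_op :: "(complex \<Rightarrow> 'x::banach \<Rightarrow> 'x) \<Rightarrow> 'x op \<Rightarrow> bool" where
  "closed_op sc T \<longleftrightarrow> linear_op sc T \<and> closed T"

definition bounded_op :: "(complex \<Rightarrow> 'x::banach \<Rightarrow> 'x) \<Rightarrow> 'x op \<Rightarrow> bool" where
  "bounded_op sc T \<longleftrightarrow> linear_op sc T \<and> op_dom T = UNIV
     \<and> (\<exists>C. \<forall>x y. (x, y) \<in> T \<longrightarrow> norm y \<le> C * norm x)"

definition op_id :: "'x op" where
  "op_id = {(x, x) | x. True}"

definition op_scale :: "(complex \<Rightarrow> 'x \<Rightarrow> 'x) \<Rightarrow> complex \<Rightarrow> 'x op \<Rightarrow> 'x op" where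
  "op_scale sc c T = {(x, sc c y) | x y. (x, y) \<in> T}"

definition op_plus :: "'x::plus op \<Rightarrow> 'x op \<Rightarrow> 'x op" where
  "op_plus S T = {(x, y + z) | x y z. (x, y) \<in> S \<and> (x, z) \<in> T}"

text \<open>op_comp S T is the product ST (first T, then S), with natural domain.\<close>
definition op_comp :: "'x op \<Rightarrow> 'x op \<Rightarrow> 'x op" where
  "op_comp S T = {(x, z) | x y z. (x, y) \<in> T \<and> (y, z) \<in> S}"

text \<open>Proto-calculus on a unital (sub)algebra with carrier H; the restriction of
  \<Phi> to a subalgebra H0 is \<Phi> considered on carrier H0.\<close>
definition proto_calculus ::
  "(complex \<Rightarrow> 'x::banach \<Rightarrow> 'x) \<Rightarrow> (complex \<Rightarrow> 'f::{ring,monoid_mult} \<Rightarrow> 'f) \<Rightarrow> 'f set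
   \<Rightarrow> ('f \<Rightarrow> 'x op) \<Rightarrow> bool" where
  "proto_calculus sc scF H \<Phi> \<longleftrightarrow>
     (\<forall>f\<in>H. closed_op sc (\<Phi> f))
     \<and> \<Phi> 1 = op_id
     \<and> (\<forall>f\<in>H. \<forall>c. op_scale sc c (\<Phi> f) \<subseteq> \<Phi> (scF c f))
     \<and> (\<forall>f\<in>H. \<forall>g\<in>H. op_plus (\<Phi> f) (\<Phi> g) \<subseteq> \<Phi> (f + g))
     \<and> (\<forall>f\<in>H. \<forall>g\<in>H. op_comp (\<Phi> f) (\<Phi> g) \<subseteq> \<Phi> (f * g)
          \<and> op_dom (op_comp (\<Phi> f) (\<Phi> g)) = op_dom (\<Phi> g) \<inter> op_dom (\<Phi> (f * g)))"

definition bdd :: "(complex \<Rightarrow> 'x::banach \<Rightarrow> 'x) \<Rightarrow> 'f set \<Rightarrow> ('f \<Rightarrow> 'x op) \<Rightarrow> 'f set" where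
  "bdd sc H \<Phi> = {f \<in> H. bounded_op sc (\<Phi> f)}"

definition reg_set :: "'f::times set \<Rightarrow> 'f \<Rightarrow> 'f set" where
  "reg_set E f = {e \<in> E. e * f \<in> E}"

definition alg_core ::
  "(complex \<Rightarrow> 'x::banach \<Rightarrow> 'x) \<Rightarrow> 'f::times set \<Rightarrow> ('f \<Rightarrow> 'x op) \<Rightarrow> 'f set \<Rightarrow> bool" where
  "alg_core sc H \<Phi> E \<longleftrightarrow> E \<subseteq> bdd sc H \<Phi>
     \<and> (\<forall>f\<in>H. \<forall>x y. (x, y) \<in> \<Phi> f \<longleftrightarrow>
          (\<forall>e\<in>reg_set E f. \<exists>z. (y, z) \<in> \<Phi> e \<and> (x, z) \<in> \<Phi> (e * f)))"

definition calculus ::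
  "(complex \<Rightarrow> 'x::banach \<Rightarrow> 'x) \<Rightarrow> (complex \<Rightarrow> 'f::{ring,monoid_mult} \<Rightarrow> 'f) \<Rightarrow> 'f set
   \<Rightarrow> ('f \<Rightarrow> 'x op) \<Rightarrow> bool" where
  "calculus sc scF H \<Phi> \<longleftrightarrow> proto_calculus sc scF H \<Phi> \<and> alg_core sc H \<Phi> (bdd sc H \<Phi>)"

definition regular_subalgebra ::
  "(complex \<Rightarrow> 'x::banach \<Rightarrow> 'x) \<Rightarrow> (complex \<Rightarrow> 'f::{ring,monoid_mult} \<Rightarrow> 'f) \<Rightarrow> ('f \<Rightarrow> 'x op)
   \<Rightarrow> 'f set \<Rightarrow> bool" where
  "regular_subalgebra sc scF \<Phi> H0 \<longleftrightarrow> unital_subalgebra scF H0 \<and> calculus sc scF H0 \<Phi>"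

end

theory Submission
  imports Defs
begin

(* The core property of E always gives the inclusion \<Phi>(\<eta> g) \<subseteq> \<Psi>(g): both sides agree after
   multiplication by any e \<in> [g]_E. So \<Phi> \<circ> \<eta> = \<Psi> only needs the reverse inclusion, and it
   follows whenever \<Phi> has an algebraic core C on a subalgebra containing \<eta>(g) such that
   \<Phi>(c) \<Psi>(g) \<subseteq> \<Phi>(c \<eta>(g)) for all c \<in> [\<eta> g]_C. If \<eta>(G) is \<Phi>-regular, take C the bounded
   elements of \<eta>(G): there \<Phi> \<circ> \<eta> is bounded, hence equal to \<Psi> (a total graph inside a
   single-valued one). If \<Phi> is a calculus on a commutative F, take C = bdd(F): the value
   \<Phi>(c \<eta>(g)) x is compared with \<Phi>(c) \<Psi>(g) x by applying the operators \<Psi>(d), d \<in> [g]_E,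
   which jointly separate points, and commuting \<Phi>(\<eta> d) past \<Phi>(c). Conversely, equality
   transports the core E to \<eta>(E), and any proto-calculus with an algebraic core is a
   calculus. *)

lemma bounded_op_total: "bounded_op sc T \<Longrightarrow> \<exists>y. (x, y) \<in> T"
  by (auto simp: bounded_op_def op_dom_def)

lemma linear_op_single_valued: "linear_op sc T \<Longrightarrow> (x, y) \<in> T \<Longrightarrow> (x, y') \<in> T \<Longrightarrow> y = y'"
  by (simp add: linear_op_def)

lemma linear_op_zero: "linear_op sc T \<Longrightarrow> (0, 0) \<in> T"
  by (simp add: linear_op_def)

lemma linear_op_diff:
  assumes X: "complex_banach_scalar sc" and T: "linear_op sc T"
    and "(u, a) \<in> T" "(v, b) \<in> T"
  shows "(u - v, a - b) \<in> T"
proof -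
  have neg: "sc (complex_of_real (-1)) z = - z" for z
    using X unfolding complex_banach_scalar_def by (metis scaleR_minus1_left)
  have "(- v, - b) \<in> T"
    using T \<open>(v, b) \<in> T\<close> unfolding linear_op_def by (metis neg)
  then have "(u + - v, a + - b) \<in> T"
    using T \<open>(u, a) \<in> T\<close> unfolding linear_op_def by blast
  then show ?thesis by simp
qed

lemma bounded_op_subset_eq:
  assumes "bounded_op sc S" "linear_op sc T" "S \<subseteq> T"
  shows "S = T"
proof
  show "T \<subseteq> S"
  proof
    fix p assume "p \<in> T"
    obtain x y where p: "p = (x, y)" by (cases p)
    obtain y' where "(x, y') \<in> S" using bounded_op_total[OF assms(1)] by blast
    moreover from this have "y' = y"
      using assms \<open>p \<in> T\<close> p linear_op_single_valued by blast
    ultimately show "p \<in> S" using p by simp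
  qed
qed (fact assms(3))

lemma proto_calculus_linear: "proto_calculus sc scF H \<Phi> \<Longrightarrow> f \<in> H \<Longrightarrow> linear_op sc (\<Phi> f)"
  unfolding proto_calculus_def closed_op_def by blast

lemma proto_calculus_comp_subset:
  "proto_calculus sc scF H \<Phi> \<Longrightarrow> f \<in> H \<Longrightarrow> g \<in> H \<Longrightarrow> op_comp (\<Phi> f) (\<Phi> g) \<subseteq> \<Phi> (f * g)"
  unfolding proto_calculus_def by blast

lemma proto_calculus_comp:
  assumes "proto_calculus sc scF H \<Phi>" "f \<in> H" "g \<in> H" "(x, u) \<in> \<Phi> g" "(u, v) \<in> \<Phi> f"
  shows "(x, v) \<in> \<Phi> (f * g)"
  using proto_calculus_comp_subset[OF assms(1-3)] assms(4,5) unfolding op_comp_def by blast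

lemma proto_calculus_comp_eq:
  assumes P: "proto_calculus sc scF UNIV \<Phi>" and prod: "f * g = f' * g'"
    and "(x, u) \<in> \<Phi> g" "(u, v) \<in> \<Phi> f" "(x, u') \<in> \<Phi> g'" "(u', v') \<in> \<Phi> f'"
  shows "v = v'"
proof -
  have "(x, v) \<in> \<Phi> (f * g)" "(x, v') \<in> \<Phi> (f * g)"
    using proto_calculus_comp[OF P] assms(3-6) prod by (metis UNIV_I)+
  then show ?thesis
    using linear_op_single_valued proto_calculus_linear[OF P] by blast
qed

lemma proto_calculus_subset:
  "proto_calculus sc scF H \<Phi> \<Longrightarrow> H0 \<subseteq> H \<Longrightarrow> proto_calculus sc scF H0 \<Phi>"
  unfolding proto_calculus_def by (meson subsetD)

lemma unital_subalgebra_range: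
  assumes "unital_alg_hom scG scF \<eta>"
  shows "unital_subalgebra scF (range \<eta>)"
proof -
  have hom: "\<eta> (a + b) = \<eta> a + \<eta> b" "\<eta> (a * b) = \<eta> a * \<eta> b" "\<eta> (scG c a) = scF c (\<eta> a)"
    for a b c using assms by (simp_all add: unital_alg_hom_def)
  have "1 \<in> range \<eta>" using assms unfolding unital_alg_hom_def by (metis rangeI)
  then show ?thesis unfolding unital_subalgebra_def by (auto simp flip: hom)
qed

lemma alg_core_bdd_subset: "alg_core sc H \<Phi> E \<Longrightarrow> E \<subseteq> bdd sc H \<Phi>"
  by (simp add: alg_core_def)

lemma alg_core_converse:
  assumes "alg_core sc H \<Phi> E" "f \<in> H"
    and "\<And>e. e \<in> reg_set E f \<Longrightarrow> \<exists>z. (y, z) \<in> \<Phi> e \<and> (x, z) \<in> \<Phi> (e * f)"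
  shows "(x, y) \<in> \<Phi> f"
  using assms unfolding alg_core_def by simp

lemma alg_core_subset_graph:
  assumes C: "alg_core sc H \<Phi> E" and f: "f \<in> H"
    and comp: "\<And>e. e \<in> reg_set E f \<Longrightarrow> op_comp (\<Phi> e) T \<subseteq> \<Phi> (e * f)"
  shows "T \<subseteq> \<Phi> f"
proof safe
  fix x y assume xy: "(x, y) \<in> T"
  have "\<exists>z. (y, z) \<in> \<Phi> e \<and> (x, z) \<in> \<Phi> (e * f)" if e: "e \<in> reg_set E f" for e
  proof -
    have "bounded_op sc (\<Phi> e)"
      using e alg_core_bdd_subset[OF C] by (auto simp: reg_set_def bdd_def)
    then obtain z where "(y, z) \<in> \<Phi> e" using bounded_op_total by blast
    with xy comp[OF e] show ?thesis unfolding op_comp_def by blast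
  qed
  then show "(x, y) \<in> \<Phi> f" by (rule alg_core_converse[OF C f])
qed

lemma alg_coreI:
  assumes P: "proto_calculus sc scF H \<Phi>" and E: "E \<subseteq> bdd sc H \<Phi>"
    and conv: "\<And>f x y. f \<in> H \<Longrightarrow> \<forall>e\<in>reg_set E f. \<exists>z. (y, z) \<in> \<Phi> e \<and> (x, z) \<in> \<Phi> (e * f)
                 \<Longrightarrow> (x, y) \<in> \<Phi> f"
  shows "alg_core sc H \<Phi> E"
  unfolding alg_core_def
proof (intro conjI E ballI allI iffI)
  fix f x y e assume f: "f \<in> H" and xy: "(x, y) \<in> \<Phi> f" and e: "e \<in> reg_set E f"
  then have eH: "e \<in> H" and "bounded_op sc (\<Phi> e)" using E by (auto simp: reg_set_def bdd_def)
  then obtain z where z: "(y, z) \<in> \<Phi> e" using bounded_op_total by blast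
  then have "(x, z) \<in> \<Phi> (e * f)" using proto_calculus_comp[OF P eH f xy] by blast
  with z show "\<exists>z. (y, z) \<in> \<Phi> e \<and> (x, z) \<in> \<Phi> (e * f)" by blast
next
  fix f x y
  assume "f \<in> H" "\<forall>e\<in>reg_set E f. \<exists>z. (y, z) \<in> \<Phi> e \<and> (x, z) \<in> \<Phi> (e * f)"
  then show "(x, y) \<in> \<Phi> f" by (rule conv)
qed

lemma alg_core_superset:
  assumes P: "proto_calculus sc scF H \<Phi>" and C: "alg_core sc H \<Phi> E1"
    and "E1 \<subseteq> E2" "E2 \<subseteq> bdd sc H \<Phi>"
  shows "alg_core sc H \<Phi> E2"
proof (rule alg_coreI[OF P \<open>E2 \<subseteq> bdd sc H \<Phi>\<close>])
  fix f x y
  assume "f \<in> H" and "\<forall>e\<in>reg_set E2 f. \<exists>z. (y, z) \<in> \<Phi> e \<and> (x, z) \<in> \<Phi> (e * f)"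
  moreover have "reg_set E1 f \<subseteq> reg_set E2 f" using \<open>E1 \<subseteq> E2\<close> by (auto simp: reg_set_def)
  ultimately show "(x, y) \<in> \<Phi> f" using alg_core_converse[OF C] by blast
qed

lemma calculus_if_alg_core:
  "proto_calculus sc scF H \<Phi> \<Longrightarrow> alg_core sc H \<Phi> E \<Longrightarrow> calculus sc scF H \<Phi>"
  unfolding calculus_def using alg_core_superset alg_core_bdd_subset by blast

lemma alg_core_image:
  assumes P: "proto_calculus sc scF (range \<eta>) \<Phi>"
    and mult: "\<And>a b. \<eta> (a * b) = \<eta> a * \<eta> b"
    and C: "alg_core sc UNIV (\<Phi> \<circ> \<eta>) E"
  shows "alg_core sc (range \<eta>) \<Phi> (\<eta> ` E)"
proof (rule alg_coreI[OF P])
  show "\<eta> ` E \<subseteq> bdd sc (range \<eta>) \<Phi>"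
    using alg_core_bdd_subset[OF C] by (auto simp: bdd_def)
next
  fix f x y
  assume "f \<in> range \<eta>" and R: "\<forall>e\<in>reg_set (\<eta> ` E) f. \<exists>z. (y, z) \<in> \<Phi> e \<and> (x, z) \<in> \<Phi> (e * f)"
  then obtain g where g: "f = \<eta> g" by blast
  have "(x, y) \<in> (\<Phi> \<circ> \<eta>) g"
  proof (rule alg_core_converse[OF C UNIV_I])
    fix e assume "e \<in> reg_set E g"
    then have "e \<in> E" "e * g \<in> E" by (simp_all add: reg_set_def)
    then have "\<eta> e \<in> reg_set (\<eta> ` E) f" by (auto simp: reg_set_def g mult[symmetric])
    then show "\<exists>z. (y, z) \<in> (\<Phi> \<circ> \<eta>) e \<and> (x, z) \<in> (\<Phi> \<circ> \<eta>) (e * g)"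
      using R g by (simp add: mult)
  qed
  then show "(x, y) \<in> \<Phi> f" using g by simp
qed

lemma alg_core_separates_points:
  assumes X: "complex_banach_scalar sc" and P: "proto_calculus sc scF H \<Psi>"
    and C: "alg_core sc H \<Psi> E" and g: "g \<in> H"
    and same: "\<And>d. d \<in> reg_set E g \<Longrightarrow> \<exists>z. (w, z) \<in> \<Psi> d \<and> (w', z) \<in> \<Psi> d"
  shows "w = w'"
proof -
  have EH: "E \<subseteq> H" using alg_core_bdd_subset[OF C] unfolding bdd_def by blast
  have "\<exists>z. (w - w', z) \<in> \<Psi> d \<and> (0, z) \<in> \<Psi> (d * g)" if d: "d \<in> reg_set E g" for d
  proof -
    have "d \<in> H" "d * g \<in> H" using d EH by (auto simp: reg_set_def)
    obtain z where "(w, z) \<in> \<Psi> d" "(w', z) \<in> \<Psi> d" using same[OF d] by blast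
    from linear_op_diff[OF X proto_calculus_linear[OF P \<open>d \<in> H\<close>] this]
    have "(w - w', 0) \<in> \<Psi> d" by simp
    moreover have "(0, 0) \<in> \<Psi> (d * g)"
      by (rule linear_op_zero[OF proto_calculus_linear[OF P \<open>d * g \<in> H\<close>]])
    ultimately show ?thesis by blast
  qed
  then have "(0, w - w') \<in> \<Psi> g" by (rule alg_core_converse[OF C g])
  moreover have "(0, 0) \<in> \<Psi> g" by (rule linear_op_zero[OF proto_calculus_linear[OF P g]])
  ultimately have "w - w' = 0"
    by (rule linear_op_single_valued[OF proto_calculus_linear[OF P g]])
  then show ?thesis by simp
qed

locale calculi_agreeing_on_core =
  fixes sc :: "complex \<Rightarrow> 'x::banach \<Rightarrow> 'x"
    and scF :: "complex \<Rightarrow> 'f::{ring,monoid_mult} \<Rightarrow> 'f"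
    and scG :: "complex \<Rightarrow> 'g::{ring,monoid_mult} \<Rightarrow> 'g"
    and \<eta> :: "'g \<Rightarrow> 'f"
    and \<Phi> :: "'f \<Rightarrow> 'x op" and \<Psi> :: "'g \<Rightarrow> 'x op"
    and E :: "'g set"
  assumes Phi: "proto_calculus sc scF UNIV \<Phi>"
    and Psi: "proto_calculus sc scG UNIV \<Psi>"
    and core: "alg_core sc UNIV \<Psi> E"
    and agree: "\<And>e. e \<in> E \<Longrightarrow> \<Phi> (\<eta> e) = \<Psi> e"
    and eta_mult: "\<And>a b. \<eta> (a * b) = \<eta> a * \<eta> b"
begin

lemma bounded_op_core: "e \<in> E \<Longrightarrow> bounded_op sc (\<Psi> e)"
  using alg_core_bdd_subset[OF core] by (auto simp: bdd_def)

lemma agree_reg_set: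
  assumes "e \<in> reg_set E g"
  shows "\<Phi> (\<eta> e) = \<Psi> e" "\<Phi> (\<eta> e * \<eta> g) = \<Psi> (e * g)"
proof -
  have "e \<in> E" "e * g \<in> E" using assms by (simp_all add: reg_set_def)
  then show "\<Phi> (\<eta> e) = \<Psi> e" "\<Phi> (\<eta> e * \<eta> g) = \<Psi> (e * g)"
    using agree[of e] agree[of "e * g"] eta_mult by simp_all
qed

lemma Phi_eta_subset: "\<Phi> (\<eta> g) \<subseteq> \<Psi> g"
proof (rule alg_core_subset_graph[OF core UNIV_I])
  fix e assume "e \<in> reg_set E g"
  from agree_reg_set[OF this] show "op_comp (\<Psi> e) (\<Phi> (\<eta> g)) \<subseteq> \<Psi> (e * g)"
    using proto_calculus_comp_subset[OF Phi UNIV_I UNIV_I, of "\<eta> e" "\<eta> g"] by simp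
qed

lemma Phi_eta_eq_if_bounded: "bounded_op sc (\<Phi> (\<eta> g)) \<Longrightarrow> \<Phi> (\<eta> g) = \<Psi> g"
  using bounded_op_subset_eq Phi_eta_subset proto_calculus_linear[OF Psi] by blast

lemma Phi_eta_eq_if_core:
  assumes "alg_core sc H \<Phi> C" "\<eta> g \<in> H"
    and "\<And>c. c \<in> reg_set C (\<eta> g) \<Longrightarrow> op_comp (\<Phi> c) (\<Psi> g) \<subseteq> \<Phi> (c * \<eta> g)"
  shows "\<Phi> (\<eta> g) = \<Psi> g"
  using alg_core_subset_graph[OF assms] Phi_eta_subset by blast

lemma Phi_eta_eq_if_regular:
  assumes "calculus sc scF (range \<eta>) \<Phi>"
  shows "\<Phi> (\<eta> g) = \<Psi> g"
proof (rule Phi_eta_eq_if_core)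
  show "alg_core sc (range \<eta>) \<Phi> (bdd sc (range \<eta>) \<Phi>)"
    using assms by (simp add: calculus_def)
next
  fix c assume c: "c \<in> reg_set (bdd sc (range \<eta>) \<Phi>) (\<eta> g)"
  then obtain a where a: "c = \<eta> a" by (auto simp: reg_set_def bdd_def)
  with c have "bounded_op sc (\<Phi> (\<eta> a))" "bounded_op sc (\<Phi> (\<eta> (a * g)))"
    by (auto simp: reg_set_def bdd_def eta_mult)
  then have "\<Phi> c = \<Psi> a" "\<Phi> (c * \<eta> g) = \<Psi> (a * g)"
    using Phi_eta_eq_if_bounded a eta_mult by auto
  then show "op_comp (\<Phi> c) (\<Psi> g) \<subseteq> \<Phi> (c * \<eta> g)"
    using proto_calculus_comp_subset[OF Psi] by simp
qed simp

lemma comp_subset_if_commutative: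
  assumes X: "complex_banach_scalar sc" and comm: "\<And>a b :: 'f. a * b = b * a"
    and c: "bounded_op sc (\<Phi> c)" and cg: "bounded_op sc (\<Phi> (c * \<eta> g))"
  shows "op_comp (\<Phi> c) (\<Psi> g) \<subseteq> \<Phi> (c * \<eta> g)"
proof safe
  fix x w assume "(x, w) \<in> op_comp (\<Phi> c) (\<Psi> g)"
  then obtain y where xy: "(x, y) \<in> \<Psi> g" and yw: "(y, w) \<in> \<Phi> c"
    unfolding op_comp_def by blast
  obtain w' where xw': "(x, w') \<in> \<Phi> (c * \<eta> g)" using bounded_op_total[OF cg] by blast
  have "w' = w"
    \<comment> \<open>\<Psi>(d) maps both w' and w to \<Phi>(c) \<Psi>(d) y, commuting \<Phi>(\<eta> d) past \<Phi>(c)\<close>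
  proof (rule alg_core_separates_points[OF X Psi core UNIV_I])
    fix d assume dg: "d \<in> reg_set E g"
    then have d: "d \<in> E" by (simp add: reg_set_def)
    note Phi_d = agree_reg_set(1)[OF dg] and Phi_dg = agree_reg_set(2)[OF dg]
    obtain v where yv: "(y, v) \<in> \<Psi> d" using bounded_op_total bounded_op_core d by blast
    obtain b where vb: "(v, b) \<in> \<Phi> c" using bounded_op_total[OF c] by blast
    obtain a' where w'a': "(w', a') \<in> \<Psi> d" using bounded_op_total bounded_op_core d by blast
    obtain a where wa: "(w, a) \<in> \<Psi> d" using bounded_op_total bounded_op_core d by blast
    have "(x, v) \<in> \<Phi> (\<eta> d * \<eta> g)"
      using proto_calculus_comp[OF Psi _ _ xy yv] Phi_dg by simp
    then have "a' = b"
      using proto_calculus_comp_eq[OF Phi _ xw' _ _ vb] w'a' Phi_d comm by (metis mult.assoc)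
    moreover have "a = b"
      using proto_calculus_comp_eq[OF Phi _ yw _ _ vb] wa yv Phi_d comm by metis
    ultimately show "\<exists>z. (w', z) \<in> \<Psi> d \<and> (w, z) \<in> \<Psi> d" using w'a' wa by blast
  qed
  then show "(x, w) \<in> \<Phi> (c * \<eta> g)" using xw' by simp
qed

lemma Phi_eta_eq_if_commutative:
  assumes "complex_banach_scalar sc" "calculus sc scF UNIV \<Phi>" "\<And>a b :: 'f. a * b = b * a"
  shows "\<Phi> (\<eta> g) = \<Psi> g"
proof (rule Phi_eta_eq_if_core)
  show "alg_core sc UNIV \<Phi> (bdd sc UNIV \<Phi>)" using assms(2) by (simp add: calculus_def)
qed (use comp_subset_if_commutative[OF assms(1,3)] in \<open>auto simp: reg_set_def bdd_def\<close>)

end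

theorem theorem5p8:
  fixes sc :: "complex \<Rightarrow> 'x::banach \<Rightarrow> 'x"
    and scF :: "complex \<Rightarrow> 'f::{ring,monoid_mult} \<Rightarrow> 'f"
    and scG :: "complex \<Rightarrow> 'g::{ring,monoid_mult} \<Rightarrow> 'g"
    and \<eta> :: "'g \<Rightarrow> 'f"
    and \<Phi> :: "'f \<Rightarrow> 'x op" and \<Psi> :: "'g \<Rightarrow> 'x op"
    and E :: "'g set"
  assumes X: "complex_banach_scalar sc"
    and F: "complex_algebra scF" and G: "complex_algebra scG"
    and eta: "unital_alg_hom scG scF \<eta>"
    and Phi: "proto_calculus sc scF UNIV \<Phi>"
    and Psi: "proto_calculus sc scG UNIV \<Psi>"
    and core: "alg_core sc UNIV \<Psi> E"
    and agree: "\<forall>e\<in>E. \<Phi> (\<eta> e) = \<Psi> e"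
  shows "(\<Phi> \<circ> \<eta> = \<Psi> \<longleftrightarrow> regular_subalgebra sc scF \<Phi> (range \<eta>))
       \<and> (regular_subalgebra sc scF \<Phi> (range \<eta>) \<longleftrightarrow> alg_core sc (range \<eta>) \<Phi> (\<eta> ` E))
       \<and> (calculus sc scF UNIV \<Phi> \<and> (\<forall>a b :: 'f. a * b = b * a) \<longrightarrow> \<Phi> \<circ> \<eta> = \<Psi>)"
proof -
  have mult: "\<And>a b. \<eta> (a * b) = \<eta> a * \<eta> b" using eta by (simp add: unital_alg_hom_def)
  interpret calculi_agreeing_on_core sc scF scG \<eta> \<Phi> \<Psi> E
    using Phi Psi core agree mult by unfold_locales auto
  have Phi_range: "proto_calculus sc scF (range \<eta>) \<Phi>" using proto_calculus_subset[OF Phi] by blast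
  have i_iii: "\<Phi> \<circ> \<eta> = \<Psi> \<Longrightarrow> alg_core sc (range \<eta>) \<Phi> (\<eta> ` E)"
    using alg_core_image[OF Phi_range mult] core by simp
  have iii_ii: "alg_core sc (range \<eta>) \<Phi> (\<eta> ` E) \<Longrightarrow> regular_subalgebra sc scF \<Phi> (range \<eta>)"
    using calculus_if_alg_core[OF Phi_range] unital_subalgebra_range[OF eta]
    by (simp add: regular_subalgebra_def)
  have ii_i: "regular_subalgebra sc scF \<Phi> (range \<eta>) \<Longrightarrow> \<Phi> \<circ> \<eta> = \<Psi>"
    using Phi_eta_eq_if_regular by (auto simp: regular_subalgebra_def)
  have comm_i: "calculus sc scF UNIV \<Phi> \<Longrightarrow> \<forall>a b :: 'f. a * b = b * a \<Longrightarrow> \<Phi> \<circ> \<eta> = \<Psi>"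
    using Phi_eta_eq_if_commutative[OF X] by auto
  show ?thesis using i_iii iii_ii ii_i comm_i by blast
qed

end
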